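(* Let $\mathcal T=(\mathcal S,\to)$ be an LTS over $\Sigma$, $\mathcal V$ a valuation, $Z\in\mathrm{Var}$, $\sigma\in\{\mu,\nu\}$, and $\Phi$ a fixpoint-free formula in positive normal form such that $\sigma Z.\Phi$ is well-formed, and let $S=[\![\sigma Z.\Phi]\!]_{\mathcal V}$. Then $S\vdash^{\mathcal T}_{\mathcal V,\varepsilon}\sigma Z.\Phi$ ($\varepsilon$ the empty definition list) has a successful tableau.
   Context: Fix a set $\Sigma$ and a countably infinite set $\mathrm{Var}$ of variables. An LTS is $\mathcal T=(\mathcal S,\to)$ with ${\to}\subseteq\mathcal S\times\Sigma\times\mathcal S$; $s\xrightarrow{K}s'$ means $s\xrightarrow{a}s'$ for some $a\in K$. A valuation is $\mathcal V:\mathrm{Var}\to 2^{\mathcal S}$. Formulas: $\Phi::=Z\mid\neg\Phi\mid\Phi_1\wedge\Phi_2\mid[K]\Phi\mid\nu Z.\Phi$, well-formed if in each $\nu Z.\Phi$ every free occurrence of $Z$ in $\Phi$ is under an even number of negations. Derived: $\vee$, $\langle K\rangle\Phi=\neg[K]\neg\Phi$, $\mu Z.\Phi=\neg\nu Z.\neg\Phi[Z:=\neg Z]$. Semantics: $[\![Z]\!]_{\mathcal V}=\mathcal V(Z)$, negation = complement, $\wedge$ = intersection, $[\![[K]\Phi]\!]_{\mathcal V}=\{s\mid\forall s'.\ s\xrightarrow{K}s'\Rightarrow s'\in[\![\Phi]\!]_{\mathcal V}\}$, $[\![\nu Z.\Phi]\!]_{\mathcal V}=\bigcup\{S'\mid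 S'\subseteq[\![\Phi]\!]_{\mathcal V[Z:=S']}\}$ (so $[\![\mu Z.\Phi]\!]$ is the least fixpoint). Positive normal form: built from $Z,\neg Z,\wedge,\vee,[K],\langle K\rangle,\nu,\mu$. Fixpoint-free: no subformula $\nu Z.\Psi$ or $\mu Z.\Psi$. Definition list $\Delta=(U_1=\Phi_1)\cdots(U_n=\Phi_n)$: distinct $U_i$, no $U_i$ bound in any $\Phi_j$, $U_j$ not free in $\Phi_i$ for $i\le j$; $\Delta(U_i)=\Phi_i$. Sequent $S\vdash^{\mathcal T}_{\mathcal V,\Delta}\Phi$: $S\subseteq\mathcal S$, $\Phi$ in positive normal form, every $U\in\mathrm{dom}(\Delta)$ positive and not bound in $\Phi$. Rules (conclusion; premises): ($\wedge$) $S\vdash_\Delta\Phi_1\wedge\Phi_2$; $S\vdash_\Delta\Phi_1$, $S\vdash_\Delta\Phi_2$. ($\vee$) $S\vdash_\Delta\Phi_1\vee\Phi_2$; $S_1\vdash_\Delta\Phi_1$, $S_2\vdash_\Delta\Phi_2$, $S=S_1\cup S_2$. ($[K]$) $S\vdash_\Delta[K]\Phi$; $\{s'\mid\exists s\in S.\ s\xrightarrow{K}s'\}\vdash_\Delta\Phi$. ($\langle K\rangle$, witness $f:S\to\mathcal S$, $s\xrightarrow{K}f(s)$) $S\vdash_\Delta\langle K\rangle\Phi$; $f(S)\vdash_\Delta\Phi$. ($\sigma Z$) $S\vdash_\Delta\sigma Z.\Phi$; $S\vdash_{\Delta\cdot(U=\sigma Z.\Phi)}U$, $U$ fresh. (Un)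 $S\vdash_\Delta U$; $S\vdash_\Delta\Phi[Z:=U]$, $\Delta(U)=\sigma Z.\Phi$. (Thin) $S\vdash_\Delta\Phi$; $S'\vdash_\Delta\Phi$, $S\subseteq S'$. A tableau is a finite nonempty ordered tree of nodes labelled by sequents over $\mathcal T,\mathcal V$, each internal node labelled by a rule application (plus witness function for $\langle K\rangle$) forming a rule instance with its ordered children, whose root has empty definition list and whose leaves $n$ (sequent $S_n\vdash_\Delta\Phi$) are terminal: (a) $\Phi\in\{Z,\neg Z\}$, $Z\notin\mathrm{dom}(\Delta)$; (b) $\Phi=\langle K\rangle\Psi$ and some $s\in S_n$ has no $K$-successor; (c) $\Phi=U\in\mathrm{dom}(\Delta)$ and some strict ancestor $m$ has formula $U$ with $S_n\subseteq S_m$ ($\mu$-/$\nu$-leaf according to $\Delta(U)$). Companion nodes: nodes with rule Un; companion leaves of $m$: leaves strictly below $m$ with the same formula and $S_n\subseteq S_m$, excluding companion leaves of companion nodes strictly below $m$. For a child $n'$ of $n$: $s'<_{n',n}s$ iff $s'\in S_{n'}$, $s\in S_n$ and (rule $[K]$, $s\xrightarrow{K}s'$) or (rule $(\langle K\rangle,f)$, $s'=f(s)$) or (other rule, $s'=s$). $\lessdot_{n',n}$ is least with $s\lessdot_{n,n}s$ and ($s'\lessdot_{n',m}s''$, $s''<_{m,n}s$)$\Rightarrow s'\lessdot_{n',n}s$. $<:_{n',n}$, $<:_m$ are least with: $s'<:_m s$ iff some companion leaf $m'$ of $m$ has $s'\in S_{m'}$, $s'<:_{m',m}s$; $s'<:_{n',n}s$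 iff $s'\in S_{n'}$, $s\in S_n$, and $s'\lessdot_{n',n}s$ or some companion node $m\notin\{n,n'\}$ and $t,t'\in S_m$ satisfy $s'<:_{n',m}t'$, $t'(<:_m)^+t$, $t\lessdot_{m,n}s$. A leaf is successful iff: formula $Z$ and $S_n\subseteq\mathcal V(Z)$; or $\neg Z$ and $S_n\cap\mathcal V(Z)=\emptyset$; or $\nu$-leaf; or $\mu$-leaf whose companion node $m$ has $<:_m$ well-founded. A tableau is successful iff all its leaves are successful. *)

theory Defs
  imports Main "HOL-Library.Countable"
begin

text \<open>Core syntax of the modal mu-calculus; actions of type 'a (the alphabet Sigma is
  the type 'a), variables of type 'v.\<close>
datatype ('a, 'v) fml =
    Var 'v
  | Neg "('a, 'v) fml"
  | Conj "('a, 'v) fml" "('a, 'v) fml"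
  | Box "'a set" "('a, 'v) fml"
  | Nu 'v "('a, 'v) fml"

primrec csubst :: "'v \<Rightarrow> ('a, 'v) fml \<Rightarrow> ('a, 'v) fml \<Rightarrow> ('a, 'v) fml" where
  "csubst Z g (Var Y) = (if Y = Z then g else Var Y)"
| "csubst Z g (Neg f) = Neg (csubst Z g f)"
| "csubst Z g (Conj f1 f2) = Conj (csubst Z g f1) (csubst Z g f2)"
| "csubst Z g (Box K f) = Box K (csubst Z g f)"
| "csubst Z g (Nu Y f) = (if Y = Z then Nu Y f else Nu Y (csubst Z g f))"

text \<open>occ_ok Z b f: every free occurrence of Z in f lies under a number of negations
  that is even (if b) / odd (if not b).\<close>
primrec occ_ok :: "'v \<Rightarrow> bool \<Rightarrow> ('a, 'v) fml \<Rightarrow> bool" where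
  "occ_ok Z b (Var Y) = (Y = Z \<longrightarrow> b)"
| "occ_ok Z b (Neg f) = occ_ok Z (\<not> b) f"
| "occ_ok Z b (Conj f1 f2) = (occ_ok Z b f1 \<and> occ_ok Z b f2)"
| "occ_ok Z b (Box K f) = occ_ok Z b f"
| "occ_ok Z b (Nu Y f) = (Y = Z \<or> occ_ok Z b f)"

definition positive :: "'v \<Rightarrow> ('a, 'v) fml \<Rightarrow> bool" where
  "positive Z f = occ_ok Z True f"

primrec wf_fml :: "('a, 'v) fml \<Rightarrow> bool" where
  "wf_fml (Var Y) = True"
| "wf_fml (Neg f) = wf_fml f"
| "wf_fml (Conj f1 f2) = (wf_fml f1 \<and> wf_fml f2)"
| "wf_fml (Box K f) = wf_fml f"
| "wf_fml (Nu Z f) = (wf_fml f \<and> positive Z f)"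

text \<open>An LTS is given by a state set St and a transition relation
  T \<subseteq> St \<times> Sigma \<times> St; valuations map variables to subsets of St.\<close>
primrec sem :: "'s set \<Rightarrow> ('s \<times> 'a \<times> 's) set \<Rightarrow> ('v \<Rightarrow> 's set) \<Rightarrow> ('a, 'v) fml \<Rightarrow> 's set" where
  "sem St T V (Var Z) = V Z"
| "sem St T V (Neg f) = St - sem St T V f"
| "sem St T V (Conj f1 f2) = sem St T V f1 \<inter> sem St T V f2"
| "sem St T V (Box K f) = {s \<in> St. \<forall>a s'. a \<in> K \<longrightarrow> (s, a, s') \<in> T \<longrightarrow> s' \<in> sem St T V f}"
| "sem St T V (Nu Z f) = \<Union>{S'. S' \<subseteq> St \<and> S' \<subseteq> sem St T (V(Z := S')) f}"

datatype fp = Mu | Nuf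

text \<open>Formulas in positive normal form, built from Z, not Z, and, or, [K], <K>, nu, mu.
  PFix Mu Z f is muZ.f and PFix Nuf Z f is nuZ.f.\<close>
datatype ('a, 'v) pnf =
    PVar 'v
  | PNVar 'v
  | PAnd "('a, 'v) pnf" "('a, 'v) pnf"
  | POr "('a, 'v) pnf" "('a, 'v) pnf"
  | PBox "'a set" "('a, 'v) pnf"
  | PDia "'a set" "('a, 'v) pnf"
  | PFix fp 'v "('a, 'v) pnf"

fun to_core :: "('a, 'v) pnf \<Rightarrow> ('a, 'v) fml" where
  "to_core (PVar Z) = Var Z"
| "to_core (PNVar Z) = Neg (Var Z)"
| "to_core (PAnd f g) = Conj (to_core f) (to_core g)"
| "to_core (POr f g) = Neg (Conj (Neg (to_core f)) (Neg (to_core g)))"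
| "to_core (PBox K f) = Box K (to_core f)"
| "to_core (PDia K f) = Neg (Box K (Neg (to_core f)))"
| "to_core (PFix Nuf Z f) = Nu Z (to_core f)"
| "to_core (PFix Mu Z f) = Neg (Nu Z (Neg (csubst Z (Neg (Var Z)) (to_core f))))"

definition psem :: "'s set \<Rightarrow> ('s \<times> 'a \<times> 's) set \<Rightarrow> ('v \<Rightarrow> 's set) \<Rightarrow> ('a, 'v) pnf \<Rightarrow> 's set" where
  "psem St T V f = sem St T V (to_core f)"

primrec fixfree :: "('a, 'v) pnf \<Rightarrow> bool" where
  "fixfree (PVar Z) = True"
| "fixfree (PNVar Z) = True"
| "fixfree (PAnd f g) = (fixfree f \<and> fixfree g)"
| "fixfree (POr f g) = (fixfree f \<and> fixfree g)"
| "fixfree (PBox K f) = fixfree f"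
| "fixfree (PDia K f) = fixfree f"
| "fixfree (PFix s Z f) = False"

primrec fvars :: "('a, 'v) pnf \<Rightarrow> 'v set" where
  "fvars (PVar Z) = {Z}"
| "fvars (PNVar Z) = {Z}"
| "fvars (PAnd f g) = fvars f \<union> fvars g"
| "fvars (POr f g) = fvars f \<union> fvars g"
| "fvars (PBox K f) = fvars f"
| "fvars (PDia K f) = fvars f"
| "fvars (PFix s Z f) = fvars f - {Z}"

primrec bvars :: "('a, 'v) pnf \<Rightarrow> 'v set" where
  "bvars (PVar Z) = {}"
| "bvars (PNVar Z) = {}"
| "bvars (PAnd f g) = bvars f \<union> bvars g"
| "bvars (POr f g) = bvars f \<union> bvars g"
| "bvars (PBox K f) = bvars f"
| "bvars (PDia K f) = bvars f"
| "bvars (PFix s Z f) = insert Z (bvars f)"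

primrec psubst :: "'v \<Rightarrow> 'v \<Rightarrow> ('a, 'v) pnf \<Rightarrow> ('a, 'v) pnf" where
  "psubst Z U (PVar Y) = PVar (if Y = Z then U else Y)"
| "psubst Z U (PNVar Y) = PNVar (if Y = Z then U else Y)"
| "psubst Z U (PAnd f g) = PAnd (psubst Z U f) (psubst Z U g)"
| "psubst Z U (POr f g) = POr (psubst Z U f) (psubst Z U g)"
| "psubst Z U (PBox K f) = PBox K (psubst Z U f)"
| "psubst Z U (PDia K f) = PDia K (psubst Z U f)"
| "psubst Z U (PFix s Y f) = (if Y = Z then PFix s Y f else PFix s Y (psubst Z U f))"

type_synonym ('a, 'v) deflist = "('v \<times> ('a, 'v) pnf) list"

definition ddom :: "('a, 'v) deflist \<Rightarrow> 'v set" where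
  "ddom D = fst ` set D"

definition deflist_ok :: "('a, 'v) deflist \<Rightarrow> bool" where
  "deflist_ok D \<longleftrightarrow> distinct (map fst D)
     \<and> (\<forall>i < length D. \<forall>j < length D. fst (D ! i) \<notin> bvars (snd (D ! j)))
     \<and> (\<forall>i < length D. \<forall>j < length D. i \<le> j \<longrightarrow> fst (D ! j) \<notin> fvars (snd (D ! i)))"

type_synonym ('s, 'a, 'v) sequent = "'s set \<times> ('a, 'v) deflist \<times> ('a, 'v) pnf"

definition sequent_ok :: "'s set \<Rightarrow> ('s, 'a, 'v) sequent \<Rightarrow> bool" where
  "sequent_ok St sq \<longleftrightarrow> (case sq of (S, D, f) \<Rightarrow>
     S \<subseteq> St \<and> deflist_ok D \<and>
     (\<forall>U \<in> ddom D. positive U (to_core f) \<and> U \<notin> bvars f))"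

datatype 's rule = RAnd | ROr | RBox | RDia "'s \<Rightarrow> 's" | RFix | RUn | RThin

definition fresh :: "'v \<Rightarrow> ('a, 'v) deflist \<Rightarrow> ('a, 'v) pnf \<Rightarrow> bool" where
  "fresh U D f \<longleftrightarrow> U \<notin> ddom D \<and> U \<notin> fvars f \<and> U \<notin> bvars f
     \<and> (\<forall>p \<in> set D. U \<notin> fvars (snd p) \<and> U \<notin> bvars (snd p))"

fun rule_inst :: "('s \<times> 'a \<times> 's) set \<Rightarrow> 's rule \<Rightarrow> ('s, 'a, 'v) sequent
                   \<Rightarrow> ('s, 'a, 'v) sequent list \<Rightarrow> bool" where
  "rule_inst T RAnd (S, D, f) ps \<longleftrightarrow>
     (\<exists>f1 f2. f = PAnd f1 f2 \<and> ps = [(S, D, f1), (S, D, f2)])"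
| "rule_inst T ROr (S, D, f) ps \<longleftrightarrow>
     (\<exists>f1 f2 S1 S2. f = POr f1 f2 \<and> S = S1 \<union> S2 \<and> ps = [(S1, D, f1), (S2, D, f2)])"
| "rule_inst T RBox (S, D, f) ps \<longleftrightarrow>
     (\<exists>K g. f = PBox K g \<and> ps = [({s'. \<exists>s \<in> S. \<exists>a \<in> K. (s, a, s') \<in> T}, D, g)])"
| "rule_inst T (RDia w) (S, D, f) ps \<longleftrightarrow>
     (\<exists>K g. f = PDia K g \<and> (\<forall>s \<in> S. \<exists>a \<in> K. (s, a, w s) \<in> T) \<and> ps = [(w ` S, D, g)])"
| "rule_inst T RFix (S, D, f) ps \<longleftrightarrow>
     (\<exists>sg Z g U. f = PFix sg Z g \<and> fresh U D f \<and> ps = [(S, D @ [(U, f)], PVar U)])"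
| "rule_inst T RUn (S, D, f) ps \<longleftrightarrow>
     (\<exists>U sg Z g. f = PVar U \<and> map_of D U = Some (PFix sg Z g) \<and> ps = [(S, D, psubst Z U g)])"
| "rule_inst T RThin (S, D, f) ps \<longleftrightarrow>
     (\<exists>S'. S \<subseteq> S' \<and> ps = [(S', D, f)])"

section \<open>Tableaux as finite ordered trees; nodes are addressed by positions (paths)\<close>

datatype ('s, 'a, 'v) tab =
  Nd (nset: "'s set") (ndefs: "('a, 'v) deflist") (nfml: "('a, 'v) pnf")
     (nrule: "'s rule option") (nkids: "('s, 'a, 'v) tab list")

definition nseq :: "('s, 'a, 'v) tab \<Rightarrow> ('s, 'a, 'v) sequent" where
  "nseq t = (nset t, ndefs t, nfml t)"

fun valid_pos :: "('s, 'a, 'v) tab \<Rightarrow> nat list \<Rightarrow> bool" where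
  "valid_pos t [] = True"
| "valid_pos t (i # p) = (i < length (nkids t) \<and> valid_pos (nkids t ! i) p)"

definition positions :: "('s, 'a, 'v) tab \<Rightarrow> nat list set" where
  "positions t = {p. valid_pos t p}"

fun at :: "('s, 'a, 'v) tab \<Rightarrow> nat list \<Rightarrow> ('s, 'a, 'v) tab" where
  "at t [] = t"
| "at t (i # p) = at (nkids t ! i) p"

definition below :: "nat list \<Rightarrow> nat list \<Rightarrow> bool" where
  "below m n \<longleftrightarrow> (\<exists>d. d \<noteq> [] \<and> n = m @ d)"

definition is_leaf :: "('s, 'a, 'v) tab \<Rightarrow> nat list \<Rightarrow> bool" where
  "is_leaf t p \<longleftrightarrow> p \<in> positions t \<and> nkids (at t p) = []"

definition is_child :: "('s, 'a, 'v) tab \<Rightarrow> nat list \<Rightarrow> nat list \<Rightarrow> bool" where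
  "is_child t n' n \<longleftrightarrow> n \<in> positions t \<and> (\<exists>i < length (nkids (at t n)). n' = n @ [i])"

definition c_leaf :: "('s, 'a, 'v) tab \<Rightarrow> nat list \<Rightarrow> bool" where
  "c_leaf t n \<longleftrightarrow> is_leaf t n \<and> (\<exists>U. nfml (at t n) = PVar U \<and> U \<in> ddom (ndefs (at t n)) \<and>
     (\<exists>m. below m n \<and> nfml (at t m) = PVar U \<and> nset (at t n) \<subseteq> nset (at t m)))"

definition terminal :: "('s \<times> 'a \<times> 's) set \<Rightarrow> ('s, 'a, 'v) tab \<Rightarrow> nat list \<Rightarrow> bool" where
  "terminal T t n \<longleftrightarrow>
     (\<exists>Z. (nfml (at t n) = PVar Z \<or> nfml (at t n) = PNVar Z) \<and> Z \<notin> ddom (ndefs (at t n)))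
   \<or> (\<exists>K g. nfml (at t n) = PDia K g \<and> (\<exists>s \<in> nset (at t n). \<not> (\<exists>a \<in> K. \<exists>s'. (s, a, s') \<in> T)))
   \<or> c_leaf t n"

definition is_tableau :: "'s set \<Rightarrow> ('s \<times> 'a \<times> 's) set \<Rightarrow> ('s, 'a, 'v) tab \<Rightarrow> bool" where
  "is_tableau St T t \<longleftrightarrow> ndefs t = [] \<and>
     (\<forall>p \<in> positions t. sequent_ok St (nseq (at t p)) \<and>
        (case nrule (at t p) of
           None \<Rightarrow> nkids (at t p) = [] \<and> terminal T t p
         | Some r \<Rightarrow> rule_inst T r (nseq (at t p)) (map nseq (nkids (at t p)))))"

definition comp_node :: "('s, 'a, 'v) tab \<Rightarrow> nat list \<Rightarrow> bool" where
  "comp_node t m \<longleftrightarrow> m \<in> positions t \<and> nrule (at t m) = Some RUn"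

definition cl_base :: "('s, 'a, 'v) tab \<Rightarrow> nat list \<Rightarrow> nat list \<Rightarrow> bool" where
  "cl_base t m n \<longleftrightarrow> comp_node t m \<and> is_leaf t n \<and> below m n \<and>
     nfml (at t n) = nfml (at t m) \<and> nset (at t n) \<subseteq> nset (at t m)"

text \<open>cl_upto t k m n: n is a companion leaf of m, for pairs with depth difference \<le> k
  (the recursive exclusion of companion leaves of companion nodes strictly below m).\<close>
primrec cl_upto :: "('s, 'a, 'v) tab \<Rightarrow> nat \<Rightarrow> nat list \<Rightarrow> nat list \<Rightarrow> bool" where
  "cl_upto t 0 m n = False"
| "cl_upto t (Suc k) m n \<longleftrightarrow> cl_base t m n \<and> length n \<le> length m + Suc k \<and>
     \<not> (\<exists>m'. below m m' \<and> comp_node t m' \<and> cl_upto t k m' n)"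

definition comp_leaf :: "('s, 'a, 'v) tab \<Rightarrow> nat list \<Rightarrow> nat list \<Rightarrow> bool" where
  "comp_leaf t m n \<longleftrightarrow> cl_upto t (length n) m n"

definition step :: "('s \<times> 'a \<times> 's) set \<Rightarrow> ('s, 'a, 'v) tab \<Rightarrow> nat list \<Rightarrow> 's \<Rightarrow> nat list \<Rightarrow> 's \<Rightarrow> bool" where
  "step T t n' s' n s \<longleftrightarrow> is_child t n' n \<and> s' \<in> nset (at t n') \<and> s \<in> nset (at t n) \<and>
     (case nrule (at t n) of
        Some RBox \<Rightarrow> (\<exists>K g. nfml (at t n) = PBox K g \<and> (\<exists>a \<in> K. (s, a, s') \<in> T))
      | Some (RDia w) \<Rightarrow> s' = w s
      | _ \<Rightarrow> s' = s)"

inductive trace :: "('s \<times> 'a \<times> 's) set \<Rightarrow> ('s, 'a, 'v) tab \<Rightarrow> nat list \<Rightarrow> 's \<Rightarrow> nat list \<Rightarrow> 's \<Rightarrow> bool"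
  for T t where
  trace_refl: "trace T t n s n s"
| trace_step: "trace T t n' s' m s'' \<Longrightarrow> step T t m s'' n s \<Longrightarrow> trace T t n' s' n s"

lemma tranclp_mono_aux[mono]: "(\<And>a b. x a b \<longrightarrow> y a b) \<Longrightarrow> x\<^sup>+\<^sup>+ a b \<longrightarrow> y\<^sup>+\<^sup>+ a b"
proof
  assume h: "\<And>a b. x a b \<longrightarrow> y a b"
  assume "x\<^sup>+\<^sup>+ a b"
  then show "y\<^sup>+\<^sup>+ a b"
    by (induction rule: tranclp.induct) (use h in \<open>auto intro: tranclp.intros\<close>)
qed

inductive cw :: "('s \<times> 'a \<times> 's) set \<Rightarrow> ('s, 'a, 'v) tab \<Rightarrow> nat list \<Rightarrow> 's \<Rightarrow> nat list \<Rightarrow> 's \<Rightarrow> bool"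
  and cm :: "('s \<times> 'a \<times> 's) set \<Rightarrow> ('s, 'a, 'v) tab \<Rightarrow> nat list \<Rightarrow> 's \<Rightarrow> 's \<Rightarrow> bool"
  for T t where
  cm_intro: "comp_leaf t m m' \<Longrightarrow> s' \<in> nset (at t m') \<Longrightarrow> cw T t m' s' m s \<Longrightarrow> cm T t m s' s"
| cw_trace: "s' \<in> nset (at t n') \<Longrightarrow> s \<in> nset (at t n) \<Longrightarrow> trace T t n' s' n s \<Longrightarrow> cw T t n' s' n s"
| cw_comp: "s' \<in> nset (at t n') \<Longrightarrow> s \<in> nset (at t n) \<Longrightarrow> comp_node t m \<Longrightarrow> m \<noteq> n \<Longrightarrow> m \<noteq> n' \<Longrightarrow>
    u \<in> nset (at t m) \<Longrightarrow> u' \<in> nset (at t m) \<Longrightarrow>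
    cw T t n' s' m u' \<Longrightarrow> (cm T t m)\<^sup>+\<^sup>+ u' u \<Longrightarrow> trace T t m u n s \<Longrightarrow> cw T t n' s' n s"

definition leaf_success :: "('s \<times> 'a \<times> 's) set \<Rightarrow> ('v \<Rightarrow> 's set) \<Rightarrow> ('s, 'a, 'v) tab \<Rightarrow> nat list \<Rightarrow> bool" where
  "leaf_success T V t n \<longleftrightarrow>
     (\<exists>Z. nfml (at t n) = PVar Z \<and> Z \<notin> ddom (ndefs (at t n)) \<and> nset (at t n) \<subseteq> V Z)
   \<or> (\<exists>Z. nfml (at t n) = PNVar Z \<and> Z \<notin> ddom (ndefs (at t n)) \<and> nset (at t n) \<inter> V Z = {})
   \<or> (c_leaf t n \<and> (\<exists>U Z g. nfml (at t n) = PVar U \<and> map_of (ndefs (at t n)) U = Some (PFix Nuf Z g)))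
   \<or> (c_leaf t n \<and> (\<exists>U Z g. nfml (at t n) = PVar U \<and> map_of (ndefs (at t n)) U = Some (PFix Mu Z g))
       \<and> (\<exists>m. comp_leaf t m n \<and> wfP (cm T t m)))"

definition successful_tableau :: "'s set \<Rightarrow> ('s \<times> 'a \<times> 's) set \<Rightarrow> ('v \<Rightarrow> 's set) \<Rightarrow> ('s, 'a, 'v) tab \<Rightarrow> bool" where
  "successful_tableau St T V t \<longleftrightarrow> is_tableau St T t \<and> (\<forall>n. is_leaf t n \<longrightarrow> leaf_success T V t n)"

end

(* The tableau applies the fixpoint rule once, introducing a constant U for sigma Z.Phi, unfolds U,
   and then follows the syntax tree of Phi[Z:=U]; every occurrence of Z becomes a leaf U whose
   companion is the unfolding node. States are distributed over disjunctions and diamond witnesses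
   by giving each state the least "level" at which it satisfies the current subformula, where the
   levels are {S} for nu, and for mu the transfinite approximants of the least fixpoint, which are
   well-ordered by inclusion. Along every path the level of a state never increases, and a state s
   of S satisfies Phi already at a level that does not contain s. Hence each step of the companion
   relation of a mu-leaf strictly descends along the approximants, so that relation is well-founded. *)

theory Submission
  imports Defs "HOL-Library.Bourbaki_Witt_Fixpoint"
begin

primrec ff_sem :: "'s set \<Rightarrow> ('s \<times> 'a \<times> 's) set \<Rightarrow> ('v \<Rightarrow> 's set) \<Rightarrow> ('a, 'v) pnf \<Rightarrow> 's set" where
  "ff_sem St T W (PVar Y) = W Y"
| "ff_sem St T W (PNVar Y) = St - W Y"
| "ff_sem St T W (PAnd f g) = ff_sem St T W f \<inter> ff_sem St T W g"
| "ff_sem St T W (POr f g) = ff_sem St T W f \<union> ff_sem St T W g"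
| "ff_sem St T W (PBox K f) = {s \<in> St. \<forall>a s'. a \<in> K \<longrightarrow> (s, a, s') \<in> T \<longrightarrow> s' \<in> ff_sem St T W f}"
| "ff_sem St T W (PDia K f) = {s \<in> St. \<exists>a \<in> K. \<exists>s'. (s, a, s') \<in> T \<and> s' \<in> ff_sem St T W f}"
| "ff_sem St T W (PFix x Y f) = {}"  \<comment> \<open>junk: only used on fixpoint-free formulas\<close>

primrec pnf_positive :: "'v \<Rightarrow> ('a, 'v) pnf \<Rightarrow> bool" where
  "pnf_positive Z (PVar Y) = True"
| "pnf_positive Z (PNVar Y) = (Y \<noteq> Z)"
| "pnf_positive Z (PAnd f g) = (pnf_positive Z f \<and> pnf_positive Z g)"
| "pnf_positive Z (POr f g) = (pnf_positive Z f \<and> pnf_positive Z g)"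
| "pnf_positive Z (PBox K f) = pnf_positive Z f"
| "pnf_positive Z (PDia K f) = pnf_positive Z f"
| "pnf_positive Z (PFix x Y f) = True"

lemma ff_sem_subset: "\<forall>Y. W Y \<subseteq> St \<Longrightarrow> ff_sem St T W f \<subseteq> St"
  by (induction f) auto

lemma sem_to_core_eq_ff_sem:
  assumes "fixfree f" and "\<forall>Y. W Y \<subseteq> St" and "T \<subseteq> St \<times> UNIV \<times> St"
  shows "sem St T W (to_core f) = ff_sem St T W f"
  using assms
proof (induction f)
  case (POr f1 f2)
  then show ?case using ff_sem_subset[of W St T f1] ff_sem_subset[of W St T f2] by auto
qed auto

lemma ff_sem_mono:
  "pnf_positive Z f \<Longrightarrow> A \<subseteq> B \<Longrightarrow> ff_sem St T (W(Z := A)) f \<subseteq> ff_sem St T (W(Z := B)) f"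
  by (induction f) fastforce+

lemma sem_csubst_Neg_Var:
  "fixfree f \<Longrightarrow>
   sem St T W (csubst Z (Neg (Var Z)) (to_core f)) = sem St T (W(Z := St - W Z)) (to_core f)"
  by (induction f) auto

lemma occ_ok_csubst_Neg_Var:
  "fixfree f \<Longrightarrow> occ_ok Z b (csubst Z (Neg (Var Z)) (to_core f)) = occ_ok Z (\<not> b) (to_core f)"
  by (induction f arbitrary: b) auto

lemma pnf_positive_if_occ_ok: "fixfree f \<Longrightarrow> occ_ok Z True (to_core f) \<Longrightarrow> pnf_positive Z f"
  by (induction f) auto

lemma pnf_positive_if_wf_fml_PFix:
  assumes "wf_fml (to_core (PFix sg Z Phi))" and "fixfree Phi"
  shows "pnf_positive Z Phi"
  using assms by (cases sg) (auto simp: positive_def occ_ok_csubst_Neg_Var intro: pnf_positive_if_occ_ok)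

lemma positive_to_core_psubst:
  "fixfree f \<Longrightarrow> pnf_positive Z f \<Longrightarrow> U \<notin> fvars f \<Longrightarrow> positive U (to_core (psubst Z U f))"
  by (induction f) (auto simp: positive_def)

lemma bvars_fixfree: "fixfree f \<Longrightarrow> bvars f = {}"
  by (induction f) auto

lemma fixfree_psubst: "fixfree f \<Longrightarrow> fixfree (psubst Z U f)"
  by (induction f) auto

lemma finite_fvars: "finite (fvars f)"
  by (induction f) auto

lemma postfixpoint_Union_postfixpoints:
  fixes F :: "'x set \<Rightarrow> 'x set"
  assumes "mono F" and S_def: "S = \<Union>{X. X \<subseteq> St \<and> X \<subseteq> F X}"
  shows "S \<subseteq> F S"
proof
  fix s assume "s \<in> S"
  then obtain X where "s \<in> X" and "X \<subseteq> St" and "X \<subseteq> F X" by (auto simp: S_def)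
  moreover from this have "F X \<subseteq> F S" by (intro monoD[OF assms(1)]) (auto simp: S_def)
  ultimately show "s \<in> F S" by blast
qed

lemma least_prefixpoint_complement_Union:
  fixes F :: "'x set \<Rightarrow> 'x set"
  assumes "mono F" and F_St: "\<forall>X \<subseteq> St. F X \<subseteq> St"
    and S_def: "S = St - \<Union>{X. X \<subseteq> St \<and> X \<subseteq> St - F (St - X)}"
  shows "F S \<subseteq> S" and "P \<subseteq> St \<Longrightarrow> F P \<subseteq> P \<Longrightarrow> S \<subseteq> P"
proof -
  show "F S \<subseteq> S"
  proof
    fix s assume s: "s \<in> F S"
    have "s \<notin> X" if "X \<subseteq> St" and "X \<subseteq> St - F (St - X)" for X
    proof -
      have "F S \<subseteq> F (St - X)" using that by (intro monoD[OF assms(1)]) (auto simp: S_def)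
      then show ?thesis using s that by blast
    qed
    moreover have "s \<in> St" using s F_St by (auto simp: S_def)
    ultimately show "s \<in> S" by (auto simp: S_def)
  qed
next
  assume "P \<subseteq> St" and "F P \<subseteq> P"
  moreover have "St - (St - P) = P" using \<open>P \<subseteq> St\<close> by blast
  ultimately have "St - P \<subseteq> St - F (St - (St - P))" by auto
  then show "S \<subseteq> P" using \<open>P \<subseteq> St\<close> by (auto simp: S_def)
qed

definition subset_wellordered :: "'x set set \<Rightarrow> bool" where
  "subset_wellordered C \<longleftrightarrow> (\<forall>M \<subseteq> C. M \<noteq> {} \<longrightarrow> (\<exists>A\<in>M. \<forall>B\<in>M. A \<subseteq> B))"

lemma subset_wellordered_singleton: "subset_wellordered {A}"
  by (auto simp: subset_wellordered_def subset_singleton_iff)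

lemma wfp_separated_if_subset_wellordered:
  fixes C :: "'x set set"
  assumes "subset_wellordered C"
  shows "wfP (\<lambda>x s. \<exists>B\<in>C. x \<in> B \<and> s \<notin> B)"
  unfolding wfp_eq_minimal
proof (intro allI impI)
  fix Q :: "'x set" and x assume "x \<in> Q"
  show "\<exists>z\<in>Q. \<forall>y. (\<exists>B\<in>C. y \<in> B \<and> z \<notin> B) \<longrightarrow> y \<notin> Q"
  proof (cases "\<exists>B\<in>C. B \<inter> Q \<noteq> {}")
    case False
    then show ?thesis using \<open>x \<in> Q\<close> by blast
  next
    case True
    then obtain B0 where "B0 \<in> C" "B0 \<inter> Q \<noteq> {}" and least: "\<forall>B\<in>C. B \<inter> Q \<noteq> {} \<longrightarrow> B0 \<subseteq> B"
      using assms unfolding subset_wellordered_def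
      by (drule_tac x = "{B \<in> C. B \<inter> Q \<noteq> {}}" in spec) auto
    then obtain z where "z \<in> Q" "z \<in> B0" by blast
    then show ?thesis using least by blast
  qed
qed

context
  fixes F :: "'x set \<Rightarrow> 'x set"
begin

interpretation approx: bourbaki_witt_fixpoint Sup "{(A, B). A \<le> B}" "\<lambda>X. X \<union> F X"
  by (rule bourbaki_witt_fixpoint_complete_latticeI) auto

text \<open>The transfinite approximants \<open>\<emptyset>, F \<emptyset>, F (F \<emptyset>), \<dots>\<close> with unions at limits, obtained as the
  Bourbaki-Witt tower of the inflationary map \<open>X \<mapsto> X \<union> F X\<close>.\<close>

definition approximants :: "'x set set" where
  "approximants = approx.iterates_above {}"

private lemma in_Field: "(A :: 'x set) \<in> Field {(A, B). A \<le> B}"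
  by (auto simp: Field_def)

private lemma iterates_above_subset: "B \<in> approx.iterates_above A \<Longrightarrow> A \<subseteq> B"
  using approx.iterates_above_ge[OF _ in_Field] by blast

lemma empty_approximant: "{} \<in> approximants"
  unfolding approximants_def by (rule approx.base)

lemma approximant_step: "A \<in> approximants \<Longrightarrow> A \<union> F A \<in> approximants"
  unfolding approximants_def by (rule approx.step)

lemma approximants_chain: "A \<in> approximants \<Longrightarrow> B \<in> approximants \<Longrightarrow> A \<subseteq> B \<or> B \<subseteq> A"
  using approx.chain_iterates_above[OF in_Field] unfolding approximants_def Chains_def by blast

lemma Union_approximants: "M \<subseteq> approximants \<Longrightarrow> \<Union>M \<in> approximants"
proof (cases "M = {}")
  case False
  assume "M \<subseteq> approximants"
  then have "M \<in> Chains {(A, B). A \<le> B}"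
    using approximants_chain by (auto simp: Chains_def)
  then show ?thesis using False \<open>M \<subseteq> approximants\<close> unfolding approximants_def
    by (intro approx.Sup) auto
qed (simp add: empty_approximant)

lemma approximants_successor:
  assumes "A \<in> approximants" and "B \<in> approximants"
  shows "B \<subseteq> A \<or> A \<union> F A \<subseteq> B"
  using approx.iterates_above_triangle[OF assms[unfolded approximants_def] in_Field]
    approx.iterates_above_successor[OF _ in_Field] iterates_above_subset
  by blast

lemma approximant_le_prefixpoint:
  assumes "mono F" and "F P \<subseteq> P" and "A \<in> approximants"
  shows "A \<subseteq> P"
  using assms(3) unfolding approximants_def
proof (induction A rule: approx.iterates_above.induct)
  case (step A)
  then show ?case using monoD[OF assms(1), of A P] assms(2) by auto
qed auto

lemma prefixpoint_Union_approximants: "F (\<Union>approximants) \<subseteq> \<Union>approximants"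
  using approximant_step[OF Union_approximants[OF order_refl]] by blast

lemma approximant_entry:
  "A \<in> approximants \<Longrightarrow> s \<in> A \<Longrightarrow> \<exists>B\<in>approximants. s \<notin> B \<and> s \<in> F B"
  unfolding approximants_def
proof (induction A rule: approx.iterates_above.induct)
  case (step A)
  then show ?case by (cases "s \<in> A") (auto intro: approx.step)
qed auto

lemma subset_wellordered_approximants:
  assumes "mono F"
  shows "subset_wellordered approximants"
  unfolding subset_wellordered_def
proof (intro allI impI)
  fix M assume "M \<subseteq> approximants" and "M \<noteq> {}"
  define B where "B = \<Union>{A \<in> approximants. \<forall>m\<in>M. A \<subseteq> m}"
  have B: "B \<in> approximants" and B_le: "\<forall>m\<in>M. B \<subseteq> m"
    unfolding B_def by (auto intro: Union_approximants)
  show "\<exists>A\<in>M. \<forall>C\<in>M. A \<subseteq> C"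
  proof (cases "B \<in> M")
    case False
    \<comment> \<open>B is the largest lower bound of M in the tower; its successor is again a lower bound,
      so B is a fixpoint and hence above every approximant.\<close>
    have "B \<union> F B \<subseteq> m" if "m \<in> M" for m
      using approximants_successor[OF B, of m] that B_le False \<open>M \<subseteq> approximants\<close>
      by (metis subset_antisym subsetD)
    then have "F B \<subseteq> B"
      using approximant_step[OF B] unfolding B_def by blast
    then have "m \<subseteq> B" if "m \<in> M" for m
      using approximant_le_prefixpoint[OF assms] that \<open>M \<subseteq> approximants\<close> by blast
    then show ?thesis using B_le False \<open>M \<noteq> {}\<close> by blast
  qed (use B_le in blast)
qed

end

lemma approximants_exhaust_least_prefixpoint:
  fixes F :: "'x set \<Rightarrow> 'x set"
  assumes "mono F" and F_St: "\<forall>X \<subseteq> St. F X \<subseteq> St"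
    and S_def: "S = St - \<Union>{X. X \<subseteq> St \<and> X \<subseteq> St - F (St - X)}"
  shows "\<forall>B\<in>approximants F. B \<subseteq> S" and "\<forall>s\<in>S. \<exists>B\<in>approximants F. s \<notin> B \<and> s \<in> F B"
proof -
  have "F S \<subseteq> S"
    by (rule least_prefixpoint_complement_Union(1)[OF assms])
  then show "\<forall>B\<in>approximants F. B \<subseteq> S"
    using approximant_le_prefixpoint[OF \<open>mono F\<close>] by blast
  moreover have "S \<subseteq> St"
    unfolding S_def by blast
  ultimately have "\<Union>(approximants F) \<subseteq> St"
    by blast
  then have "S \<subseteq> \<Union>(approximants F)"
    by (rule least_prefixpoint_complement_Union(2)[OF assms _ prefixpoint_Union_approximants])
  then show "\<forall>s\<in>S. \<exists>B\<in>approximants F. s \<notin> B \<and> s \<in> F B"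
    using approximant_entry[where F = F] by blast
qed

context
  fixes St :: "'s set" and T :: "('s \<times> 'a \<times> 's) set" and V :: "'v \<Rightarrow> 's set"
    and Z :: 'v and Phi :: "('a, 'v) pnf"
  assumes T_St: "T \<subseteq> St \<times> UNIV \<times> St" and V_St: "\<forall>Y. V Y \<subseteq> St" and fixfree_Phi: "fixfree Phi"
begin

private lemma sem_update:
  "X \<subseteq> St \<Longrightarrow> sem St T (V(Z := X)) (to_core Phi) = ff_sem St T (V(Z := X)) Phi"
  using V_St by (intro sem_to_core_eq_ff_sem[OF fixfree_Phi _ T_St]) auto

lemma psem_PFix_Nuf:
  "psem St T V (PFix Nuf Z Phi) = \<Union>{X. X \<subseteq> St \<and> X \<subseteq> ff_sem St T (V(Z := X)) Phi}"
proof -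
  have "(X \<subseteq> St \<and> X \<subseteq> sem St T (V(Z := X)) (to_core Phi)) \<longleftrightarrow>
        (X \<subseteq> St \<and> X \<subseteq> ff_sem St T (V(Z := X)) Phi)" for X
    using sem_update[of X] by blast
  then show ?thesis by (simp add: psem_def)
qed

lemma psem_PFix_Mu:
  "psem St T V (PFix Mu Z Phi) =
     St - \<Union>{X. X \<subseteq> St \<and> X \<subseteq> St - ff_sem St T (V(Z := St - X)) Phi}"
proof -
  have "sem St T (V(Z := X)) (csubst Z (Neg (Var Z)) (to_core Phi)) =
        ff_sem St T (V(Z := St - X)) Phi" for X
  proof -
    have "sem St T (V(Z := X)) (csubst Z (Neg (Var Z)) (to_core Phi)) =
          sem St T (V(Z := St - X)) (to_core Phi)"
      using sem_csubst_Neg_Var[OF fixfree_Phi, of St T "V(Z := X)" Z] by simp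
    also have "\<dots> = ff_sem St T (V(Z := St - X)) Phi"
      by (rule sem_update) blast
    finally show ?thesis .
  qed
  then show ?thesis by (simp add: psem_def)
qed

lemma fixpoint_levels:
  assumes "pnf_positive Z Phi" and S: "S = psem St T V (PFix sg Z Phi)"
  obtains levels where "S \<subseteq> St" and "\<forall>B\<in>levels. B \<subseteq> S" and "subset_wellordered levels"
    and "\<forall>s\<in>S. \<exists>B\<in>levels. s \<in> ff_sem St T (V(Z := B)) Phi \<and> (sg = Mu \<longrightarrow> s \<notin> B)"
proof -
  define F where "F X = ff_sem St T (V(Z := X)) Phi" for X
  have "mono F"
    unfolding F_def using ff_sem_mono[OF assms(1)] by (intro monoI) blast
  have F_St: "\<forall>X \<subseteq> St. F X \<subseteq> St"
  proof (intro allI impI)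
    fix X assume "X \<subseteq> St"
    then show "F X \<subseteq> St"
      unfolding F_def using V_St by (intro ff_sem_subset) auto
  qed
  show thesis
  proof (cases sg)
    case Nuf
    then have S: "S = \<Union>{X. X \<subseteq> St \<and> X \<subseteq> F X}"
      using psem_PFix_Nuf by (simp add: S F_def)
    have "S \<subseteq> F S"
      by (rule postfixpoint_Union_postfixpoints[OF \<open>mono F\<close> S])
    moreover have "S \<subseteq> St"
      unfolding S by blast
    ultimately show thesis
      using that[of "{S}"] subset_wellordered_singleton[of S] Nuf by (auto simp: F_def)
  next
    case Mu
    then have S: "S = St - \<Union>{X. X \<subseteq> St \<and> X \<subseteq> St - F (St - X)}"
      using psem_PFix_Mu by (simp add: S F_def)
    have "S \<subseteq> St"
      unfolding S by blast
    moreover note exhaust = approximants_exhaust_least_prefixpoint[OF \<open>mono F\<close> F_St S]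
    moreover have "\<forall>s\<in>S. \<exists>B\<in>approximants F. s \<in> ff_sem St T (V(Z := B)) Phi \<and> (sg = Mu \<longrightarrow> s \<notin> B)"
      using exhaust(2) unfolding F_def by blast
    ultimately show thesis
      using that[of "approximants F"] subset_wellordered_approximants[OF \<open>mono F\<close>] by blast
  qed
qed

end

fun pnf_child :: "('a, 'v) pnf \<Rightarrow> nat \<Rightarrow> ('a, 'v) pnf" where
  "pnf_child (PAnd f g) i = (if i = 0 then f else g)"
| "pnf_child (POr f g) i = (if i = 0 then f else g)"
| "pnf_child (PBox K f) i = f"
| "pnf_child (PDia K f) i = f"
| "pnf_child f i = f"

fun pnf_sub :: "('a, 'v) pnf \<Rightarrow> nat list \<Rightarrow> ('a, 'v) pnf" where
  "pnf_sub f [] = f"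
| "pnf_sub f (i # q) = pnf_sub (pnf_child f i) q"

lemma pnf_sub_snoc: "pnf_sub f (q @ [i]) = pnf_child (pnf_sub f q) i"
  by (induction q arbitrary: f) auto

lemma at_snoc: "at t (p @ [i]) = nkids (at t p) ! i"
  by (induction p arbitrary: t) auto

lemma valid_pos_snoc: "valid_pos t (p @ [i]) \<longleftrightarrow> valid_pos t p \<and> i < length (nkids (at t p))"
  by (induction p arbitrary: t) auto

definition rule_step :: "('s \<times> 'a \<times> 's) set \<Rightarrow> 's rule option \<Rightarrow> ('a, 'v) pnf \<Rightarrow> 's \<Rightarrow> 's \<Rightarrow> bool" where
  "rule_step T r f s s' \<longleftrightarrow> (case r of
        Some RBox \<Rightarrow> (\<exists>K g. f = PBox K g \<and> (\<exists>a \<in> K. (s, a, s') \<in> T))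
      | Some (RDia w) \<Rightarrow> s' = w s
      | _ \<Rightarrow> s' = s)"

lemma step_iff_rule_step:
  "step T t n' s' n s \<longleftrightarrow> is_child t n' n \<and> s' \<in> nset (at t n') \<and> s \<in> nset (at t n) \<and>
     rule_step T (nrule (at t n)) (nfml (at t n)) s s'"
  by (simp add: step_def rule_step_def)

locale tableau_construction =
  fixes St :: "'s set" and T :: "('s \<times> 'a \<times> 's) set" and V :: "'v \<Rightarrow> 's set"
    and sg :: fp and Z U :: 'v and Phi :: "('a, 'v) pnf"
    and S :: "'s set" and levels :: "'s set set"
  assumes T_St: "T \<subseteq> St \<times> UNIV \<times> St"
    and V_St: "\<forall>Y. V Y \<subseteq> St"
    and fixfree_Phi: "fixfree Phi"
    and positive_Phi: "pnf_positive Z Phi"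
    and U_neq_Z: "U \<noteq> Z"
    and U_not_free: "U \<notin> fvars Phi"
    and S_St: "S \<subseteq> St"
    and levels_below_S: "\<forall>B\<in>levels. B \<subseteq> S"
    and levels_wellordered: "subset_wellordered levels"
    and S_levels: "\<forall>s\<in>S. \<exists>B\<in>levels. s \<in> ff_sem St T (V(Z := B)) Phi \<and> (sg = Mu \<longrightarrow> s \<notin> B)"
begin

abbreviation sem_at :: "'s set \<Rightarrow> ('a, 'v) pnf \<Rightarrow> 's set" where
  "sem_at B f \<equiv> ff_sem St T (V(Z := B)) f"

definition level_sem :: "('a, 'v) pnf \<Rightarrow> 's set" where
  "level_sem f = (\<Union>B\<in>levels. sem_at B f)"

definition level :: "('a, 'v) pnf \<Rightarrow> 's \<Rightarrow> 's set" where
  "level f x = (LEAST B. B \<in> levels \<and> x \<in> sem_at B f)"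

lemma level_minimal:
  assumes "B \<in> levels" and "x \<in> sem_at B f"
  shows "level f x \<in> levels" and "level f x \<subseteq> B" and "x \<in> sem_at (level f x) f"
proof -
  obtain A where A: "A \<in> levels" "x \<in> sem_at A f"
    and least: "\<And>C. C \<in> levels \<and> x \<in> sem_at C f \<Longrightarrow> A \<subseteq> C"
    using levels_wellordered assms unfolding subset_wellordered_def
    by (drule_tac x = "{C \<in> levels. x \<in> sem_at C f}" in spec) auto
  have "level f x = A"
    unfolding level_def by (rule Least_equality) (use A least in auto)
  then show "level f x \<in> levels" and "level f x \<subseteq> B" and "x \<in> sem_at (level f x) f"
    using A least assms by auto
qed

lemma level_if_level_sem:
  assumes "x \<in> level_sem f"
  shows "level f x \<in> levels" and "x \<in> sem_at (level f x) f"
  using assms level_minimal(1,3) by (auto simp: level_sem_def)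

definition \<Delta> :: "('a, 'v) deflist" where
  "\<Delta> = [(U, PFix sg Z Phi)]"

definition or_left :: "('a, 'v) pnf \<Rightarrow> ('a, 'v) pnf \<Rightarrow> 's set" where
  "or_left f g = {x. x \<in> sem_at (level (POr f g) x) f}"

definition dia_succ :: "'a set \<Rightarrow> ('a, 'v) pnf \<Rightarrow> 's \<Rightarrow> 's" where
  "dia_succ K f x = (SOME y. \<exists>a\<in>K. (x, a, y) \<in> T \<and> y \<in> sem_at (level (PDia K f) x) f)"

primrec subtableau :: "('a, 'v) pnf \<Rightarrow> 's set \<Rightarrow> ('s, 'a, 'v) tab" where
  "subtableau (PVar Y) X = Nd X \<Delta> (psubst Z U (PVar Y)) None []"
| "subtableau (PNVar Y) X = Nd X \<Delta> (psubst Z U (PNVar Y)) None []"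
| "subtableau (PAnd f g) X = Nd X \<Delta> (psubst Z U (PAnd f g)) (Some RAnd) [subtableau f X, subtableau g X]"
| "subtableau (POr f g) X = Nd X \<Delta> (psubst Z U (POr f g)) (Some ROr)
      [subtableau f (X \<inter> or_left f g), subtableau g (X - or_left f g)]"
| "subtableau (PBox K f) X = Nd X \<Delta> (psubst Z U (PBox K f)) (Some RBox)
      [subtableau f {s'. \<exists>s \<in> X. \<exists>a \<in> K. (s, a, s') \<in> T}]"
| "subtableau (PDia K f) X = Nd X \<Delta> (psubst Z U (PDia K f)) (Some (RDia (dia_succ K f)))
      [subtableau f (dia_succ K f ` X)]"
| "subtableau (PFix s Y f) X = Nd X \<Delta> (PFix s Y f) None []"

definition admissible :: "('a, 'v) pnf \<Rightarrow> bool" where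
  "admissible f \<longleftrightarrow> fixfree f \<and> pnf_positive Z f \<and> U \<notin> fvars f"

lemma admissible_pnf_child: "admissible f \<Longrightarrow> admissible (pnf_child f i)"
  by (cases "(f, i)" rule: pnf_child.cases) (auto simp: admissible_def)

lemma admissible_pnf_sub: "admissible f \<Longrightarrow> admissible (pnf_sub f q)"
  by (induction q arbitrary: f) (auto simp: admissible_pnf_child)

lemma nset_subtableau [simp]: "nset (subtableau f X) = X"
  and ndefs_subtableau [simp]: "ndefs (subtableau f X) = \<Delta>"
  by (cases f; simp)+

lemma nfml_subtableau: "fixfree f \<Longrightarrow> nfml (subtableau f X) = psubst Z U f"
  by (cases f) auto

lemma dia_succ:
  assumes "x \<in> sem_at (level (PDia K f) x) (PDia K f)"
  shows "\<exists>a\<in>K. (x, a, dia_succ K f x) \<in> T \<and> dia_succ K f x \<in> sem_at (level (PDia K f) x) f"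
proof -
  have "\<exists>y. \<exists>a\<in>K. (x, a, y) \<in> T \<and> y \<in> sem_at (level (PDia K f) x) f"
    using assms by auto
  then show ?thesis unfolding dia_succ_def by (rule someI_ex)
qed

lemma subtableau_kid:
  "i < length (nkids (subtableau f X)) \<Longrightarrow> \<exists>Y. nkids (subtableau f X) ! i = subtableau (pnf_child f i) Y"
  by (cases f) (auto simp: less_Suc_eq)

lemma subtableau_kid_parent:
  assumes "i < length (nkids (subtableau f X))" and "s' \<in> nset (nkids (subtableau f X) ! i)"
  shows "\<exists>s\<in>X. rule_step T (nrule (subtableau f X)) (nfml (subtableau f X)) s s'"
  using assms by (cases f) (auto simp: rule_step_def less_Suc_eq)

lemma subtableau_kid_sem_at:
  assumes "X \<subseteq> level_sem f" and "i < length (nkids (subtableau f X))"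
    and "s \<in> X" and "s' \<in> nset (nkids (subtableau f X) ! i)"
    and "rule_step T (nrule (subtableau f X)) (nfml (subtableau f X)) s s'"
  shows "s' \<in> sem_at (level f s) (pnf_child f i)"
proof -
  have s: "s \<in> sem_at (level f s) f"
    using assms(1,3) level_if_level_sem by blast
  show ?thesis
  proof (cases f)
    case (PDia K g)
    then show ?thesis using assms s dia_succ[of s K g] by (auto simp: rule_step_def)
  qed (use assms s in \<open>auto simp: rule_step_def less_Suc_eq or_left_def\<close>)
qed

lemma level_step:
  assumes "X \<subseteq> level_sem f" and "i < length (nkids (subtableau f X))"
    and "s \<in> X" and "s' \<in> nset (nkids (subtableau f X) ! i)"
    and "rule_step T (nrule (subtableau f X)) (nfml (subtableau f X)) s s'"
  shows "level (pnf_child f i) s' \<subseteq> level f s"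
  using level_minimal(2)[OF level_if_level_sem(1) subtableau_kid_sem_at[OF assms]] assms(1,3) by blast

lemma subtableau_kid_level_sem:
  assumes "X \<subseteq> level_sem f" and "i < length (nkids (subtableau f X))"
    and "nkids (subtableau f X) ! i = subtableau (pnf_child f i) Y"
  shows "Y \<subseteq> level_sem (pnf_child f i)"
proof
  fix s' assume "s' \<in> Y"
  then obtain s where "s \<in> X" and "rule_step T (nrule (subtableau f X)) (nfml (subtableau f X)) s s'"
    using subtableau_kid_parent[OF assms(2)] assms(3) by auto
  then have "s' \<in> sem_at (level f s) (pnf_child f i)"
    using subtableau_kid_sem_at[OF assms(1,2)] assms(3) \<open>s' \<in> Y\<close> by auto
  moreover have "level f s \<in> levels"
    using level_if_level_sem(1) assms(1) \<open>s \<in> X\<close> by blast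
  ultimately show "s' \<in> level_sem (pnf_child f i)"
    by (auto simp: level_sem_def)
qed

lemma at_subtableau:
  assumes "valid_pos (subtableau f X) q" and "X \<subseteq> level_sem f"
  shows "\<exists>Y. at (subtableau f X) q = subtableau (pnf_sub f q) Y \<and> Y \<subseteq> level_sem (pnf_sub f q)"
  using assms
proof (induction q arbitrary: f X)
  case (Cons i q)
  then have i: "i < length (nkids (subtableau f X))" by simp
  then obtain Y where Y: "nkids (subtableau f X) ! i = subtableau (pnf_child f i) Y"
    using subtableau_kid by blast
  then have "Y \<subseteq> level_sem (pnf_child f i)"
    using subtableau_kid_level_sem[OF Cons.prems(2) i] by blast
  then show ?case using Cons.IH[of "pnf_child f i" Y] Cons.prems(1) Y by simp
qed auto

lemma level_sem_St: "level_sem f \<subseteq> St"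
proof -
  have "sem_at B f \<subseteq> St" if "B \<in> levels" for B
    using that levels_below_S S_St V_St by (intro ff_sem_subset) auto
  then show ?thesis by (auto simp: level_sem_def)
qed

lemma level_sem_PVar_Z: "level_sem (PVar Z) \<subseteq> S"
  using levels_below_S by (auto simp: level_sem_def)

lemma S_level_sem: "S \<subseteq> level_sem Phi"
  using S_levels by (auto simp: level_sem_def)

lemma admissible_pnf_sub_Phi: "admissible (pnf_sub Phi q)"
  using admissible_pnf_sub fixfree_Phi positive_Phi U_not_free by (simp add: admissible_def)

lemma inner_node:
  assumes "valid_pos (subtableau Phi S) q"
  obtains Y where "at (subtableau Phi S) q = subtableau (pnf_sub Phi q) Y"
    and "Y \<subseteq> level_sem (pnf_sub Phi q)"
  using at_subtableau[OF assms S_level_sem] by blast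

lemma deflist_ok_\<Delta>: "deflist_ok \<Delta>"
  using fixfree_Phi U_neq_Z U_not_free by (auto simp: deflist_ok_def \<Delta>_def bvars_fixfree)

lemma ddom_\<Delta> [simp]: "ddom \<Delta> = {U}"
  by (simp add: ddom_def \<Delta>_def)

lemma sequent_ok_subtableau:
  assumes "admissible f" and "X \<subseteq> level_sem f"
  shows "sequent_ok St (nseq (subtableau f X))"
proof -
  have "positive U (to_core (psubst Z U f))"
    using assms(1) by (simp add: admissible_def positive_to_core_psubst)
  moreover have "U \<notin> bvars (psubst Z U f)"
    using assms(1) by (simp add: admissible_def bvars_fixfree fixfree_psubst)
  ultimately show ?thesis
    using assms level_sem_St deflist_ok_\<Delta>
    by (auto simp: sequent_ok_def nseq_def nfml_subtableau admissible_def)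
qed

lemma rule_inst_subtableau:
  assumes "admissible f" and "X \<subseteq> level_sem f" and "nrule (subtableau f X) = Some r"
  shows "rule_inst T r (nseq (subtableau f X)) (map nseq (nkids (subtableau f X)))"
proof (cases f)
  case (PDia K g)
  have "\<forall>s\<in>X. \<exists>a\<in>K. (s, a, dia_succ K g s) \<in> T"
    using dia_succ level_if_level_sem(2) assms(2) PDia by blast
  then show ?thesis using PDia assms(1,3) by (auto simp: nseq_def admissible_def nfml_subtableau)
qed (use assms in \<open>auto simp: nseq_def admissible_def nfml_subtableau\<close>)

lemma nrule_subtableau_None_iff: "nrule (subtableau f X) = None \<longleftrightarrow> nkids (subtableau f X) = []"
  by (cases f) auto

lemma nrule_subtableau_not_RUn: "nrule (subtableau f X) \<noteq> Some RUn"
  by (cases f) auto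

lemma literal_if_subtableau_leaf:
  "admissible f \<Longrightarrow> nkids (subtableau f X) = [] \<Longrightarrow> \<exists>Y. f = PVar Y \<or> f = PNVar Y"
  by (cases f) (auto simp: admissible_def)

definition tableau :: "('s, 'a, 'v) tab" where
  "tableau = Nd S [] (PFix sg Z Phi) (Some RFix) [Nd S \<Delta> (PVar U) (Some RUn) [subtableau Phi S]]"

lemma tableau_simps [simp]:
  "nset tableau = S" "ndefs tableau = []" "nfml tableau = PFix sg Z Phi" "nrule tableau = Some RFix"
  "nkids tableau = [Nd S \<Delta> (PVar U) (Some RUn) [subtableau Phi S]]"
  by (simp_all add: tableau_def)

lemma positions_tableau:
  "p \<in> positions tableau \<longleftrightarrow> p = [] \<or> p = [0] \<or> (\<exists>q. p = 0 # 0 # q \<and> valid_pos (subtableau Phi S) q)"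
  by (cases p; cases "tl p") (auto simp: positions_def tableau_def)

lemma tableau_leaf_cases:
  assumes "is_leaf tableau n"
  obtains (Z_leaf) q Y where "n = 0 # 0 # q" and "valid_pos (subtableau Phi S) q"
      and "pnf_sub Phi q = PVar Z" and "at tableau n = subtableau (PVar Z) Y" and "Y \<subseteq> level_sem (PVar Z)"
  | (pos_literal) Y' where "nfml (at tableau n) = PVar Y'" and "ndefs (at tableau n) = \<Delta>"
      and "Y' \<noteq> U" and "nset (at tableau n) \<subseteq> V Y'"
  | (neg_literal) Y' where "nfml (at tableau n) = PNVar Y'" and "ndefs (at tableau n) = \<Delta>"
      and "Y' \<noteq> U" and "nset (at tableau n) \<inter> V Y' = {}"
proof -
  from assms have "n \<in> positions tableau" and "nkids (at tableau n) = []"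
    by (auto simp: is_leaf_def)
  then obtain q where n: "n = 0 # 0 # q" and q: "valid_pos (subtableau Phi S) q"
    by (auto simp: positions_tableau)
  obtain Y where Y: "at (subtableau Phi S) q = subtableau (pnf_sub Phi q) Y"
    and Y_sem: "Y \<subseteq> level_sem (pnf_sub Phi q)"
    using inner_node[OF q] by blast
  have adm: "admissible (pnf_sub Phi q)" by (rule admissible_pnf_sub_Phi)
  then obtain Y' where lit: "pnf_sub Phi q = PVar Y' \<or> pnf_sub Phi q = PNVar Y'"
    using literal_if_subtableau_leaf \<open>nkids (at tableau n) = []\<close> n Y by auto
  show thesis
  proof (cases "Y' = Z")
    case True
    then have "pnf_sub Phi q = PVar Z" using lit adm by (auto simp: admissible_def)
    then show thesis using Z_leaf n q Y Y_sem by simp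
  next
    case False
    have "Y' \<noteq> U" using lit adm by (auto simp: admissible_def)
    from lit show thesis
    proof
      assume lit: "pnf_sub Phi q = PVar Y'"
      have "level_sem (PVar Y') \<subseteq> V Y'" using False by (auto simp: level_sem_def)
      then show thesis using pos_literal[of Y'] n Y Y_sem lit False \<open>Y' \<noteq> U\<close> by auto
    next
      assume lit: "pnf_sub Phi q = PNVar Y'"
      have "level_sem (PNVar Y') \<inter> V Y' = {}" using False by (auto simp: level_sem_def)
      then show thesis using neg_literal[of Y'] n Y Y_sem lit False \<open>Y' \<noteq> U\<close> by auto
    qed
  qed
qed

lemma comp_node_tableau:
  assumes "comp_node tableau m"
  shows "m = [0]"
proof -
  have "nrule (at (subtableau Phi S) q) \<noteq> Some RUn" if "valid_pos (subtableau Phi S) q" for q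
    using inner_node[OF that] nrule_subtableau_not_RUn by metis
  then show ?thesis using assms by (auto simp: comp_node_def positions_tableau)
qed

lemma comp_leaf_root_iff: "comp_leaf tableau [0] n \<longleftrightarrow> cl_base tableau [0] n"
proof
  assume "cl_base tableau [0] n"
  moreover from this obtain k where "length n = Suc (Suc k)"
    by (auto simp: cl_base_def below_def neq_Nil_conv)
  moreover have "\<not> below [0] [0]" by (simp add: below_def)
  ultimately show "comp_leaf tableau [0] n"
    by (auto simp: comp_leaf_def dest: comp_node_tableau)
next
  assume "comp_leaf tableau [0] n"
  then show "cl_base tableau [0] n"
    by (cases "length n") (auto simp: comp_leaf_def)
qed

lemma Z_leaf_companion:
  assumes "n = 0 # 0 # q" and "valid_pos (subtableau Phi S) q"
    and "at tableau n = subtableau (PVar Z) Y" and "Y \<subseteq> level_sem (PVar Z)"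
  shows "cl_base tableau [0] n" and "c_leaf tableau n"
proof -
  have "below [0] n" using assms(1) by (simp add: below_def)
  then show "cl_base tableau [0] n" and "c_leaf tableau n"
    using assms level_sem_PVar_Z
    by (auto simp: cl_base_def c_leaf_def comp_node_def is_leaf_def positions_tableau
        intro!: exI[of _ "[0]"])
qed

lemma terminal_tableau_leaf:
  assumes "is_leaf tableau n"
  shows "terminal T tableau n"
  using assms
proof (cases rule: tableau_leaf_cases)
  case Z_leaf
  then show ?thesis using Z_leaf_companion(2)[OF Z_leaf(1,2,4,5)] by (simp add: terminal_def)
qed (auto simp: terminal_def)

lemma fresh_U: "fresh U [] (PFix sg Z Phi)"
  using U_not_free U_neq_Z fixfree_Phi by (auto simp: fresh_def ddom_def bvars_fixfree)

lemma is_tableau: "is_tableau St T tableau"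
  unfolding is_tableau_def
proof (rule conjI[OF _ ballI])
  show "ndefs tableau = []" by simp
next
  fix p assume "p \<in> positions tableau"
  then consider "p = []" | "p = [0]" | q where "p = 0 # 0 # q" "valid_pos (subtableau Phi S) q"
    by (auto simp: positions_tableau)
  then show "sequent_ok St (nseq (at tableau p)) \<and>
    (case nrule (at tableau p) of
       None \<Rightarrow> nkids (at tableau p) = [] \<and> terminal T tableau p
     | Some r \<Rightarrow> rule_inst T r (nseq (at tableau p)) (map nseq (nkids (at tableau p))))"
  proof cases
    case 1
    then show ?thesis
      using S_St fresh_U by (auto simp: nseq_def sequent_ok_def deflist_ok_def ddom_def \<Delta>_def)
  next
    case 2
    then show ?thesis
      using S_St deflist_ok_\<Delta> fixfree_Phi
      by (auto simp: nseq_def sequent_ok_def positive_def \<Delta>_def nfml_subtableau)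
  next
    case (3 q)
    obtain Y where Y: "at (subtableau Phi S) q = subtableau (pnf_sub Phi q) Y"
      and Y_sem: "Y \<subseteq> level_sem (pnf_sub Phi q)"
      using inner_node[OF 3(2)] by blast
    have "is_leaf tableau p" if "nrule (at tableau p) = None"
      using that 3 Y nrule_subtableau_None_iff by (auto simp: is_leaf_def positions_tableau)
    then show ?thesis
      using 3 Y Y_sem admissible_pnf_sub_Phi sequent_ok_subtableau rule_inst_subtableau
        terminal_tableau_leaf
      by (auto simp: is_leaf_def split: option.split)
  qed
qed

lemma step_from_inner:
  assumes "step T tableau (0 # 0 # q) s' n s" and "valid_pos (subtableau Phi S) q"
  shows "(\<exists>q0. n = 0 # 0 # q0 \<and> valid_pos (subtableau Phi S) q0 \<and>
              level (pnf_sub Phi q) s' \<subseteq> level (pnf_sub Phi q0) s)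
         \<or> (n = [0] \<and> q = [] \<and> s' = s \<and> s \<in> S)"
proof -
  from assms(1) obtain i where n: "n \<in> positions tableau" and i: "i < length (nkids (at tableau n))"
    and q: "0 # 0 # q = n @ [i]" and s': "s' \<in> nset (at tableau (0 # 0 # q))"
    and s: "s \<in> nset (at tableau n)" and rs: "rule_step T (nrule (at tableau n)) (nfml (at tableau n)) s s'"
    unfolding step_iff_rule_step is_child_def by blast
  show ?thesis
  proof (cases q rule: rev_exhaust)
    case Nil
    then have "n = [0]" using q by simp
    then show ?thesis using Nil s rs by (simp add: rule_step_def)
  next
    case (snoc q0 j)
    then have n0: "n = 0 # 0 # q0" and "i = j" using q by auto
    have q0: "valid_pos (subtableau Phi S) q0" and j: "j < length (nkids (at (subtableau Phi S) q0))"
      using assms(2) snoc by (auto simp: valid_pos_snoc)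
    obtain Y where Y: "at (subtableau Phi S) q0 = subtableau (pnf_sub Phi q0) Y"
      and Y_sem: "Y \<subseteq> level_sem (pnf_sub Phi q0)"
      using inner_node[OF q0] by blast
    have "level (pnf_child (pnf_sub Phi q0) j) s' \<subseteq> level (pnf_sub Phi q0) s"
      using level_step[OF Y_sem] j Y s s' rs n0 snoc \<open>i = j\<close> by (simp add: at_snoc)
    then show ?thesis using n0 q0 snoc by (simp add: pnf_sub_snoc)
  qed
qed

lemma trace_from_inner:
  assumes "trace T tableau n' s' n s" and "n' = 0 # 0 # q'" and "valid_pos (subtableau Phi S) q'"
  shows "(\<exists>q. n = 0 # 0 # q \<and> valid_pos (subtableau Phi S) q \<and>
              level (pnf_sub Phi q') s' \<subseteq> level (pnf_sub Phi q) s)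
         \<or> (n = [0] \<and> s \<in> S \<and> level (pnf_sub Phi q') s' \<subseteq> level Phi s)
         \<or> n = []"
  using assms
proof (induction rule: trace.induct)
  case (trace_refl n s)
  then show ?case by auto
next
  case (trace_step n' s' m s'' n s)
  from trace_step.hyps(2) obtain i where mi: "m = n @ [i]"
    by (auto simp: step_def is_child_def)
  from trace_step.IH[OF trace_step.prems] show ?case
  proof (elim disjE exE conjE)
    fix q assume "m = 0 # 0 # q" and "valid_pos (subtableau Phi S) q"
      and "level (pnf_sub Phi q') s' \<subseteq> level (pnf_sub Phi q) s''"
    then show ?case
      using step_from_inner[of q s'' n s] trace_step.hyps(2) by auto
  next
    assume "m = [0]"
    then show ?case using mi by (cases n) auto
  next
    assume "m = []"
    then show ?case using mi by simp
  qed
qed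

lemma cm_tableau_separated:
  assumes "sg = Mu" and "cm T tableau [0] x s"
  shows "\<exists>B\<in>levels. x \<in> B \<and> s \<notin> B"
proof -
  from assms(2) obtain n where n: "comp_leaf tableau [0] n" and x: "x \<in> nset (at tableau n)"
    and cw: "cw T tableau n x [0] s"
    by (cases rule: cm.cases) auto
  from cw have tr: "trace T tableau n x [0] s"
    by (cases rule: cw.cases) (auto dest: comp_node_tableau)
  from n have "is_leaf tableau n" and "nfml (at tableau n) = PVar U"
    by (auto simp: comp_leaf_root_iff cl_base_def)
  then obtain q Y where nq: "n = 0 # 0 # q" and q: "valid_pos (subtableau Phi S) q"
    and Z: "pnf_sub Phi q = PVar Z" and "at tableau n = subtableau (PVar Z) Y"
    and "Y \<subseteq> level_sem (PVar Z)"
    by (cases rule: tableau_leaf_cases) auto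
  with x have "x \<in> level (PVar Z) x"
    using level_if_level_sem(2)[of x "PVar Z"] by auto
  moreover have "s \<in> S" and "level (PVar Z) x \<subseteq> level Phi s"
    using trace_from_inner[OF tr nq q] Z by auto
  moreover obtain B where "B \<in> levels" and "s \<in> sem_at B Phi" and "s \<notin> B"
    using S_levels \<open>s \<in> S\<close> assms(1) by blast
  ultimately show ?thesis using level_minimal(1,2)[of B s Phi] by blast
qed

lemma wfP_cm_tableau: "sg = Mu \<Longrightarrow> wfP (cm T tableau [0])"
  using wfp_subset[OF wfp_separated_if_subset_wellordered[OF levels_wellordered]]
    cm_tableau_separated by blast

lemma leaf_success_tableau:
  assumes "is_leaf tableau n"
  shows "leaf_success T V tableau n"
  using assms
proof (cases rule: tableau_leaf_cases)
  case (Z_leaf q Y)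
  then have "c_leaf tableau n" and "comp_leaf tableau [0] n"
    using Z_leaf_companion[OF Z_leaf(1,2,4,5)] by (simp_all add: comp_leaf_root_iff)
  moreover have "nfml (at tableau n) = PVar U"
    and "map_of (ndefs (at tableau n)) U = Some (PFix sg Z Phi)"
    using Z_leaf by (simp_all add: \<Delta>_def)
  ultimately show ?thesis
    using wfP_cm_tableau unfolding leaf_success_def by (cases sg) blast+
qed (auto simp: leaf_success_def)

lemma successful_tableau: "successful_tableau St T V tableau"
  using is_tableau leaf_success_tableau by (simp add: successful_tableau_def)

end

theorem corollary12:
  fixes St :: "'s set" and T :: "('s \<times> 'a \<times> 's) set" and V :: "'v::countable \<Rightarrow> 's set"
    and Z :: 'v and sg :: fp and Phi :: "('a, 'v) pnf"
  assumes "infinite (UNIV :: 'v set)"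
    and "T \<subseteq> St \<times> UNIV \<times> St"
    and "\<forall>Y. V Y \<subseteq> St"
    and "fixfree Phi"
    and "wf_fml (to_core (PFix sg Z Phi))"
  shows "\<exists>t. successful_tableau St T V t \<and>
           nseq t = (psem St T V (PFix sg Z Phi), [], PFix sg Z Phi)"
proof -
  define S where "S = psem St T V (PFix sg Z Phi)"
  obtain U where U: "U \<notin> insert Z (fvars Phi)"
    using ex_new_if_finite[OF assms(1) finite.insertI[OF finite_fvars]] by blast
  have positive: "pnf_positive Z Phi"
    using pnf_positive_if_wf_fml_PFix[OF assms(5,4)] .
  obtain levels where "S \<subseteq> St" and "\<forall>B\<in>levels. B \<subseteq> S" and "subset_wellordered levels"
    and "\<forall>s\<in>S. \<exists>B\<in>levels. s \<in> ff_sem St T (V(Z := B)) Phi \<and> (sg = Mu \<longrightarrow> s \<notin> B)"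
    using fixpoint_levels[OF assms(2-4) positive S_def] .
  then interpret tableau_construction St T V sg Z U Phi S levels
    using assms(2-4) positive U by unfold_locales simp_all
  have "nseq tableau = (S, [], PFix sg Z Phi)"
    by (simp add: nseq_def)
  then show ?thesis
    using successful_tableau unfolding S_def by blast
qed

end
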